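(* Let $I_0$ be an interval and let $\{f_k\}_{k\ge0}$ be a $C^1$-uniformly equicontinuous and $C^1$-uniformly bounded sequence of $C^1$ maps $f_k:I_0\to I_0$ with $p=\sup_k\#\mathcal{C}_k<\infty$, and let $\lambda>0$. Given $\gamma>0$, there exists $\varepsilon>0$ such that for every $n\in\mathbb{N}$ and every $x\in Y_n(\lambda)$, $$\frac1n\sum_{j=0}^{n-1}\chi_{V_\varepsilon\mathcal{C}_j}(f^j(x))<\gamma.$$ Moreover, $\varepsilon$ does not depend on $n$; it depends on $\lambda$, on the modulus of uniform equicontinuity of $\{f_k\}$ and on the uniform bound $\Gamma$ of $\{Df_k\}$.
   Context: $\mathcal{C}_k$ is the set of critical points of $f_k$; $f^j=f_{j-1}\circ\cdots\circ f_0$, $f^0=\mathrm{id}$. $Y_n(\lambda)=\{x\in I_0:\frac1n\log|Df^n(x)|>\lambda\}$. $V_\varepsilon\mathcal{C}_k$ is the union of the balls $B(c,\varepsilon)$ over $c\in\mathcal{C}_k$, and $\chi$ denotes the indicator function. $C^1$-uniformly equicontinuous: for every $\zeta>0$ there is $\varepsilon>0$ such that $|x-y|<\varepsilon$ implies $|f_k(x)-f_k(y)|<\zeta$ and $|Df_k(x)-Df_k(y)|<\zeta$ for all $k$. $C^1$-uniformly bounded: there is $\Gamma>0$ with $|f_k(x)|,|Df_k(x)|\le\Gamma$ for all $x,k$. *)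

theory Defs
  imports "HOL-Analysis.Analysis"
begin

fun fiter :: "(nat \<Rightarrow> real \<Rightarrow> real) \<Rightarrow> nat \<Rightarrow> real \<Rightarrow> real" where
  "fiter f 0 = id"
| "fiter f (Suc j) = f j \<circ> fiter f j"

text \<open>Critical points of f_k on I0 (Df k is the derivative of f k).\<close>
definition crit :: "real set \<Rightarrow> (nat \<Rightarrow> real \<Rightarrow> real) \<Rightarrow> nat \<Rightarrow> real set" where
  "crit I0 Df k = {x \<in> I0. Df k x = 0}"

text \<open>Derivative of f^n at x, given by the chain rule.\<close>
definition Dfiter :: "(nat \<Rightarrow> real \<Rightarrow> real) \<Rightarrow> (nat \<Rightarrow> real \<Rightarrow> real) \<Rightarrow> nat \<Rightarrow> real \<Rightarrow> real" where
  "Dfiter f Df n x = (\<Prod>j<n. Df j (fiter f j x))"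

definition Yset :: "real set \<Rightarrow> (nat \<Rightarrow> real \<Rightarrow> real) \<Rightarrow> (nat \<Rightarrow> real \<Rightarrow> real) \<Rightarrow> nat \<Rightarrow> real \<Rightarrow> real set" where
  "Yset I0 f Df n lam = {x \<in> I0. (1 / real n) * ln \<bar>Dfiter f Df n x\<bar> > lam}"

definition nbhd :: "real set \<Rightarrow> real \<Rightarrow> real set" where
  "nbhd C e = (\<Union>c\<in>C. ball c e)"

end

theory Submission
  imports Defs
begin

text \<open>Since |Df_k| \<le> \<Gamma>, each factor contributes at most L = ln (max \<Gamma> 1) to ln |Df^n x|,
  while uniform equicontinuity of the derivatives makes every factor taken within \<epsilon> of a
  critical point contribute less than -K. If ln |Df^n x| > n\<lambda> > 0, the number m of such
  visits therefore satisfies K m < n L, and choosing K = (L + 1) / \<gamma> gives m < \<gamma> n.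
  Only the derivative bound and the equicontinuity of the derivatives enter: Df^n is the
  chain-rule product by definition, and no finiteness of the critical sets is needed.\<close>

lemma fiter_in:
  assumes "\<And>k. f k ` I0 \<subseteq> I0" "x \<in> I0"
  shows "fiter f j x \<in> I0"
  using assms by (induction j) auto

lemma ln_abs_Dfiter:
  assumes "Dfiter f Df n x \<noteq> 0"
  shows "ln \<bar>Dfiter f Df n x\<bar> = (\<Sum>j<n. ln \<bar>Df j (fiter f j x)\<bar>)"
  using assms unfolding Dfiter_def abs_prod by (intro ln_prod) auto

lemma abs_deriv_less_near_crit:
  assumes modulus: "\<forall>x\<in>I0. \<forall>y\<in>I0. \<bar>x - y\<bar> < \<epsilon> \<longrightarrow> \<bar>Df k x - Df k y\<bar> < \<delta>"
    and "y \<in> I0" "y \<in> nbhd (crit I0 Df k) \<epsilon>"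
  shows "\<bar>Df k y\<bar> < \<delta>"
proof -
  obtain c where "c \<in> I0" "Df k c = 0" "\<bar>y - c\<bar> < \<epsilon>"
    using assms(3) unfolding nbhd_def crit_def by (auto simp: dist_real_def abs_minus_commute)
  then show ?thesis using modulus \<open>y \<in> I0\<close> by force
qed

lemma count_penalized_terms_less:
  fixes a :: "nat \<Rightarrow> real"
  assumes "L \<ge> 0" "K > 0"
    and le_L: "\<And>j. j < n \<Longrightarrow> a j \<le> L"
    and le_neg_K: "\<And>j. j < n \<Longrightarrow> P j \<Longrightarrow> a j \<le> - K"
    and pos: "0 < (\<Sum>j<n. a j)"
  shows "K * (\<Sum>j<n. of_bool (P j)) < real n * L"
proof -
  define m where "m = (\<Sum>j<n. of_bool (P j) :: real)"
  have "(\<Sum>j<n. a j) \<le> (\<Sum>j<n. L - (L + K) * of_bool (P j))"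
    using le_L le_neg_K by (intro sum_mono) auto
  also have "\<dots> = real n * L - (L + K) * m"
    unfolding m_def by (simp add: sum_subtractf sum_distrib_left)
  finally have "(L + K) * m < real n * L" using pos by linarith
  moreover have "m \<ge> 0" unfolding m_def by (simp add: sum_nonneg)
  ultimately show ?thesis unfolding m_def using \<open>L \<ge> 0\<close> by (smt (verit) mult_right_mono)
qed

lemma critical_visits_less:
  assumes maps: "\<And>k. f k ` I0 \<subseteq> I0"
    and bound: "\<forall>k. \<forall>x\<in>I0. \<bar>Df k x\<bar> \<le> \<Gamma>"
    and modulus: "\<forall>k. \<forall>x\<in>I0. \<forall>y\<in>I0. \<bar>x - y\<bar> < \<epsilon> \<longrightarrow> \<bar>Df k x - Df k y\<bar> < exp (-K)"
    and "K > 0" "x \<in> I0" and ln_pos: "0 < ln \<bar>Dfiter f Df n x\<bar>"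
  shows "K * (\<Sum>j<n. indicator (nbhd (crit I0 Df j) \<epsilon>) (fiter f j x)) < real n * ln (max \<Gamma> 1)"
  unfolding indicator_def
proof (rule count_penalized_terms_less[OF _ \<open>K > 0\<close>])
  have Dfiter_nonzero: "Dfiter f Df n x \<noteq> 0" using ln_pos by auto
  then have nonzero: "Df j (fiter f j x) \<noteq> 0" if "j < n" for j
    using that unfolding Dfiter_def by auto
  have orbit_in: "fiter f j x \<in> I0" for j using fiter_in[OF maps \<open>x \<in> I0\<close>] .
  show "0 \<le> ln (max \<Gamma> 1)" by simp
  show "0 < (\<Sum>j<n. ln \<bar>Df j (fiter f j x)\<bar>)"
    using ln_pos ln_abs_Dfiter[OF Dfiter_nonzero] by simp
  fix j assume "j < n"
  have "\<bar>Df j (fiter f j x)\<bar> \<le> max \<Gamma> 1" using bound orbit_in by (meson max.coboundedI1)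
  then show "ln \<bar>Df j (fiter f j x)\<bar> \<le> ln (max \<Gamma> 1)"
    using nonzero[OF \<open>j < n\<close>] by simp
  assume "fiter f j x \<in> nbhd (crit I0 Df j) \<epsilon>"
  then have "\<bar>Df j (fiter f j x)\<bar> < exp (-K)"
    using modulus orbit_in by (intro abs_deriv_less_near_crit[of I0 \<epsilon> Df j]) blast+
  then show "ln \<bar>Df j (fiter f j x)\<bar> \<le> - K"
    using nonzero[OF \<open>j < n\<close>]
    by (metis zero_less_abs_iff ln_exp ln_less_cancel_iff exp_gt_zero less_imp_le)
qed

theorem lemma4p3:
  fixes I0 :: "real set" and f Df :: "nat \<Rightarrow> real \<Rightarrow> real" and lam :: real
  assumes interval: "is_interval I0" "interior I0 \<noteq> {}"
    and maps: "\<And>k. f k ` I0 \<subseteq> I0"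
    and deriv: "\<And>k x. x \<in> I0 \<Longrightarrow> (f k has_real_derivative Df k x) (at x within I0)"
    and C1: "\<And>k. continuous_on I0 (Df k)"
    and equicont: "\<And>\<zeta>. \<zeta> > 0 \<Longrightarrow> \<exists>\<epsilon>>0. \<forall>k. \<forall>x\<in>I0. \<forall>y\<in>I0. \<bar>x - y\<bar> < \<epsilon> \<longrightarrow>
                     \<bar>f k x - f k y\<bar> < \<zeta> \<and> \<bar>Df k x - Df k y\<bar> < \<zeta>"
    and bounded: "\<exists>\<Gamma>>0. \<forall>k. \<forall>x\<in>I0. \<bar>f k x\<bar> \<le> \<Gamma> \<and> \<bar>Df k x\<bar> \<le> \<Gamma>"
    and crit_fin: "\<exists>p::nat. \<forall>k. finite (crit I0 Df k) \<and> card (crit I0 Df k) \<le> p"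
    and lam: "lam > 0"
  shows "\<forall>\<gamma>>0. \<exists>\<epsilon>>0. \<forall>n\<ge>1. \<forall>x \<in> Yset I0 f Df n lam.
           (1 / real n) * (\<Sum>j<n. indicator (nbhd (crit I0 Df j) \<epsilon>) (fiter f j x)) < \<gamma>"
proof (intro allI impI)
  fix \<gamma> :: real assume "\<gamma> > 0"
  obtain \<Gamma> where \<Gamma>: "\<forall>k. \<forall>x\<in>I0. \<bar>Df k x\<bar> \<le> \<Gamma>" using bounded by blast
  define L where "L = ln (max \<Gamma> 1)"
  define K where "K = (L + 1) / \<gamma>"
  have "L \<ge> 0" unfolding L_def by simp
  then have "K > 0" unfolding K_def using \<open>\<gamma> > 0\<close> by simp
  obtain \<epsilon> where "\<epsilon> > 0" and modulus: "\<forall>k. \<forall>x\<in>I0. \<forall>y\<in>I0. \<bar>x - y\<bar> < \<epsilon> \<longrightarrow>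
                     \<bar>Df k x - Df k y\<bar> < exp (-K)"
    using equicont[of "exp (-K)"] by auto
  have "(1 / real n) * (\<Sum>j<n. indicator (nbhd (crit I0 Df j) \<epsilon>) (fiter f j x)) < \<gamma>"
    (is "_ * ?m < _")
    if "n \<ge> 1" "x \<in> Yset I0 f Df n lam" for n x
  proof -
    have "x \<in> I0" and "real n * lam < ln \<bar>Dfiter f Df n x\<bar>"
      using that unfolding Yset_def by (auto simp: field_simps)
    moreover have "0 < real n * lam" using lam \<open>n \<ge> 1\<close> by simp
    ultimately have "K * ?m < real n * L"
      unfolding L_def by (intro critical_visits_less[OF maps \<Gamma> modulus \<open>K > 0\<close>]) auto
    also have "\<dots> < real n * (L + 1)" using \<open>n \<ge> 1\<close> by simp
    finally have "(L + 1) * ?m < (L + 1) * (\<gamma> * real n)"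
      using \<open>\<gamma> > 0\<close> unfolding K_def by (simp add: field_simps)
    then have "?m < \<gamma> * real n"
      using \<open>L \<ge> 0\<close> by (metis mult_less_cancel_left_pos add_nonneg_pos zero_less_one)
    then show ?thesis using \<open>n \<ge> 1\<close> by (simp add: field_simps)
  qed
  then show "\<exists>\<epsilon>>0. \<forall>n\<ge>1. \<forall>x \<in> Yset I0 f Df n lam.
           (1 / real n) * (\<Sum>j<n. indicator (nbhd (crit I0 Df j) \<epsilon>) (fiter f j x)) < \<gamma>"
    using \<open>\<epsilon> > 0\<close> by blast
qed

end
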